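(* Let $n\ge 1$ be an integer and $b_a,b_v,c$ real parameters. For $p,q\in[0,1]$ let $n_G\sim\mathrm{Bin}(n,p)$ and, conditionally on $n_G$, $n_V\sim\mathrm{Bin}(n-n_G,q)$ (equivalently $(n_G,n_V)$ is multinomial with $n$ trials and outcome probabilities $p,(1-p)q,(1-p)(1-q)$). Define $$w_G=\mathbb E\Big[\tfrac{b_a(n_G+1)}{n+1}\Big],\quad w_V=\mathbb E\Big[\tfrac{b_an_G}{n+1}\Big]+\mathbb E\Big[\tfrac{b_v(n_V+1)}{n-n_G+1}\Big]-c,\quad w_D=\mathbb E\Big[\tfrac{b_an_G}{n+1}\Big]+\mathbb E\Big[\tfrac{b_vn_V}{n-n_G+1}\Big],$$ and $\langle w\rangle_{V,D}=qw_V+(1-q)w_D$. Then $$w_G-\langle w\rangle_{V,D}=\frac{b_a}{n+1}-q(b_v-c),\qquad w_V-w_D=\frac{b_v}{n+1}\sum_{k=0}^n p^k-c.$$ Consequently the dynamics $\dot p=p(1-p)(w_G-\langle w\rangle_{V,D})$, $\dot q=q(1-q)(w_V-w_D)$ take the form $$\dot p=p(1-p)\Big(\frac{b_a}{n+1}-q(b_v-c)\Big),\qquad \dot q=q(1-q)\Big(\frac{b_v}{n+1}\sum_{k=0}^n p^k-c\Big).$$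
   Context: This is the "double goods game": $p$ is the proportion of glycolytic cells (G), $q$ the proportion of VEGF (over)producers (V) among aerobic cells (V and D). $b_a$ is the benefit per unit of acidification (a public good produced by G cells and shared among all $n+1$ group members), $b_v$ the benefit per unit of vascularization (a club good produced by V cells at cost $c$ and shared only among the $n-n_G+1$ aerobic members of the group), and $n$ the number of interaction partners. *)

theory Defs
  imports "HOL-Probability.Probability"
begin

definition group_pmf :: "nat \<Rightarrow> real \<Rightarrow> real \<Rightarrow> (nat \<times> nat) pmf" where
  "group_pmf n p q =
     bind_pmf (binomial_pmf n p) (\<lambda>g. map_pmf (\<lambda>v. (g, v)) (binomial_pmf (n - g) q))"

definition wG :: "nat \<Rightarrow> real \<Rightarrow> real \<Rightarrow> real \<Rightarrow> real \<Rightarrow> real \<Rightarrow> real" where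
  "wG n ba bv c p q =
     measure_pmf.expectation (group_pmf n p q) (\<lambda>(g, v). ba * (real g + 1) / (real n + 1))"

definition wV :: "nat \<Rightarrow> real \<Rightarrow> real \<Rightarrow> real \<Rightarrow> real \<Rightarrow> real \<Rightarrow> real" where
  "wV n ba bv c p q =
     measure_pmf.expectation (group_pmf n p q) (\<lambda>(g, v). ba * real g / (real n + 1))
   + measure_pmf.expectation (group_pmf n p q)
       (\<lambda>(g, v). bv * (real v + 1) / (real n - real g + 1))
   - c"

definition wD :: "nat \<Rightarrow> real \<Rightarrow> real \<Rightarrow> real \<Rightarrow> real \<Rightarrow> real \<Rightarrow> real" where
  "wD n ba bv c p q =
     measure_pmf.expectation (group_pmf n p q) (\<lambda>(g, v). ba * real g / (real n + 1))
   + measure_pmf.expectation (group_pmf n p q)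
       (\<lambda>(g, v). bv * real v / (real n - real g + 1))"

definition wVD :: "nat \<Rightarrow> real \<Rightarrow> real \<Rightarrow> real \<Rightarrow> real \<Rightarrow> real \<Rightarrow> real" where
  "wVD n ba bv c p q = q * wV n ba bv c p q + (1 - q) * wD n ba bv c p q"

definition pdot :: "nat \<Rightarrow> real \<Rightarrow> real \<Rightarrow> real \<Rightarrow> real \<Rightarrow> real \<Rightarrow> real" where
  "pdot n ba bv c p q = p * (1 - p) * (wG n ba bv c p q - wVD n ba bv c p q)"

definition qdot :: "nat \<Rightarrow> real \<Rightarrow> real \<Rightarrow> real \<Rightarrow> real \<Rightarrow> real \<Rightarrow> real" where
  "qdot n ba bv c p q = q * (1 - q) * (wV n ba bv c p q - wD n ba bv c p q)"

end

theory Submission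
  imports Defs
begin

text \<open>Conditionally on \<open>n\<^sub>G = g\<close>, \<open>n\<^sub>V\<close> is binomial with mean \<open>(n - g) q\<close>, so the
  \<open>q : (1 - q)\<close> mixture of the club-good payoffs of V and D equals \<open>q b\<^sub>v\<close> whatever \<open>g\<close>
  is, while the public-good payoffs of G and of V, D differ by the constant \<open>b\<^sub>a / (n + 1)\<close>.
  The difference \<open>w\<^sub>V - w\<^sub>D\<close> is the expected club-good share \<open>b\<^sub>v E[1 / (n - n\<^sub>G + 1)]\<close>;
  the absorption identity \<open>(n + 1) C(n, g) / (n - g + 1) = C(n + 1, g)\<close> turns this expectation
  into \<open>\<Sum>g\<le>n. C(n + 1, g) p^g (1 - p)^(n - g) / (n + 1)\<close>, and multiplying the sum by
  \<open>1 - p\<close> completes it to the binomial expansion of \<open>1 - p^(n + 1)\<close>.\<close>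

lemma expectation_binomial_pmf_real:
  assumes "p \<in> {0..1}"
  shows "measure_pmf.expectation (binomial_pmf n p) real = real n * p"
proof (cases n)
  case 0
  then show ?thesis using assms by (simp add: expectation_binomial_pmf')
next
  case (Suc m)
  have "measure_pmf.expectation (binomial_pmf n p) real
      = (\<Sum>k\<le>m. real (Suc k) * real (Suc m choose Suc k) * p ^ Suc k * (1 - p) ^ (m - k))"
    unfolding expectation_binomial_pmf'[OF assms] Suc sum.atMost_Suc_shift by (simp add: mult_ac)
  also have "\<dots> = (\<Sum>k\<le>m. real n * p * (real (m choose k) * p ^ k * (1 - p) ^ (m - k)))"
  proof (intro sum.cong refl)
    fix k
    have "real (Suc k) * real (Suc m choose Suc k) = real n * real (m choose k)"
      unfolding Suc of_nat_mult[symmetric] Suc_times_binomial ..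
    then show "real (Suc k) * real (Suc m choose Suc k) * p ^ Suc k * (1 - p) ^ (m - k)
        = real n * p * (real (m choose k) * p ^ k * (1 - p) ^ (m - k))"
      by (simp add: mult_ac)
  qed
  also have "\<dots> = real n * p * (p + (1 - p)) ^ m"
    by (subst binomial_ring) (simp add: atLeast0AtMost sum_distrib_left mult_ac)
  finally show ?thesis by simp
qed

lemma expectation_binomial_pmf_affine:
  assumes "p \<in> {0..1}"
  shows "measure_pmf.expectation (binomial_pmf n p) (\<lambda>k. a * real k + b) = a * real n * p + b"
  using assms by (simp add: expectation_binomial_pmf_real)

lemma expectation_binomial_pmf_cong:
  fixes f g :: "nat \<Rightarrow> real"
  assumes "p \<in> {0..1}" and "\<And>k. k \<le> n \<Longrightarrow> f k = g k"
  shows "measure_pmf.expectation (binomial_pmf n p) f = measure_pmf.expectation (binomial_pmf n p) g"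
  unfolding expectation_binomial_pmf'[OF assms(1)] using assms(2) by simp

lemma sum_choose_Suc_power:
  fixes p :: "'a :: field"
  shows "(\<Sum>k\<le>n. of_nat (Suc n choose k) * p ^ k * (1 - p) ^ (n - k)) = (\<Sum>k\<le>n. p ^ k)"
proof (cases "p = 1")
  case True
  have "(\<Sum>k\<le>n. of_nat (Suc n choose k) * p ^ k * (1 - p) ^ (n - k))
      = (\<Sum>k\<in>{n}. of_nat (Suc n choose k) * p ^ k * (1 - p) ^ (n - k))"
    using True by (intro sum.mono_neutral_right) auto
  then show ?thesis using True by simp
next
  case False
  have "(1 - p) * (\<Sum>k\<le>n. of_nat (Suc n choose k) * p ^ k * (1 - p) ^ (n - k))
      = (\<Sum>k\<le>Suc n. of_nat (Suc n choose k) * p ^ k * (1 - p) ^ (Suc n - k)) - p ^ Suc n"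
    by (simp add: sum_distrib_left Suc_diff_le mult_ac)
  also have "\<dots> = (p + (1 - p)) ^ Suc n - p ^ Suc n"
    by (subst binomial_ring) (simp add: atLeast0AtMost mult_ac)
  also have "\<dots> = (1 - p) * (\<Sum>k\<le>n. p ^ k)"
    using one_diff_power_eq[of p "Suc n"] by (simp add: lessThan_Suc_atMost)
  finally show ?thesis using False by simp
qed

lemma expectation_binomial_pmf_inverse_complement:
  assumes "p \<in> {0..1}"
  shows "measure_pmf.expectation (binomial_pmf n p) (\<lambda>k. 1 / (real n - real k + 1))
       = (\<Sum>k\<le>n. p ^ k) / (real n + 1)"
proof -
  have absorb: "real (n choose k) / (real n - real k + 1) = real (Suc n choose k) / (real n + 1)"
    if "k \<le> n" for k
  proof -
    have "(Suc n - k) * (Suc n choose k) = Suc n * (n choose k)"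
      using binomial_absorb_comp[of "Suc n" k] by simp
    then have "(real n - real k + 1) * real (Suc n choose k) = (real n + 1) * real (n choose k)"
      using that by (metis Suc_diff_le of_nat_Suc of_nat_mult of_nat_diff add.commute)
    then show ?thesis using that by (simp add: field_simps)
  qed
  have "measure_pmf.expectation (binomial_pmf n p) (\<lambda>k. 1 / (real n - real k + 1))
      = (\<Sum>k\<le>n. real (Suc n choose k) * p ^ k * (1 - p) ^ (n - k)) / (real n + 1)"
    unfolding expectation_binomial_pmf'[OF assms] real_scaleR_def sum_divide_distrib
  proof (intro sum.cong refl)
    fix k assume "k \<in> {..n}"
    have "real (n choose k) * p ^ k * (1 - p) ^ (n - k) * (1 / (real n - real k + 1))
        = real (n choose k) / (real n - real k + 1) * (p ^ k * (1 - p) ^ (n - k))"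
      by (simp add: mult.assoc)
    also have "\<dots> = real (Suc n choose k) * p ^ k * (1 - p) ^ (n - k) / (real n + 1)"
      using \<open>k \<in> {..n}\<close> by (simp add: absorb mult.assoc)
    finally show "real (n choose k) * p ^ k * (1 - p) ^ (n - k) * (1 / (real n - real k + 1))
        = real (Suc n choose k) * p ^ k * (1 - p) ^ (n - k) / (real n + 1)" .
  qed
  then show ?thesis by (simp add: sum_choose_Suc_power)
qed

lemma finite_set_pmf_group_pmf:
  assumes "p \<in> {0..1}" and "q \<in> {0..1}"
  shows "finite (set_pmf (group_pmf n p q))"
  using assms unfolding group_pmf_def by (auto intro!: finite_UN_I finite_set_pmf_binomial_pmf)

lemma integrable_group_pmf:
  fixes f :: "nat \<times> nat \<Rightarrow> real"
  assumes "p \<in> {0..1}" and "q \<in> {0..1}"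
  shows "integrable (group_pmf n p q) f"
  using finite_set_pmf_group_pmf[OF assms] by (rule integrable_measure_pmf_finite)

lemma expectation_group_pmf:
  fixes h :: "nat \<times> nat \<Rightarrow> real"
  assumes p: "p \<in> {0..1}" and q: "q \<in> {0..1}"
  shows "measure_pmf.expectation (group_pmf n p q) h
       = measure_pmf.expectation (binomial_pmf n p)
           (\<lambda>g. measure_pmf.expectation (binomial_pmf (n - g) q) (\<lambda>v. h (g, v)))"
  unfolding group_pmf_def expectation_binomial_pmf'[OF p]
  using p q by (subst pmf_expectation_bind[where A = "{..n}"]) (auto simp: set_pmf_binomial_eq)

lemma expectation_group_pmf_fst:
  fixes f :: "nat \<Rightarrow> real"
  assumes "p \<in> {0..1}" and "q \<in> {0..1}"
  shows "measure_pmf.expectation (group_pmf n p q) (\<lambda>(g, v). f g)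
       = measure_pmf.expectation (binomial_pmf n p) f"
  using assms by (simp add: expectation_group_pmf)

lemma expectation_group_pmf_affine:
  assumes "p \<in> {0..1}" and "q \<in> {0..1}"
  shows "measure_pmf.expectation (group_pmf n p q) (\<lambda>(g, v). a g * real v + b g)
       = measure_pmf.expectation (binomial_pmf n p) (\<lambda>g. a g * real (n - g) * q + b g)"
  by (simp only: expectation_group_pmf[OF assms] case_prod_conv
      expectation_binomial_pmf_affine[OF assms(2)])

lemma club_good_mean_payoff:
  assumes p: "p \<in> {0..1}" and q: "q \<in> {0..1}"
  shows "q * measure_pmf.expectation (group_pmf n p q)
              (\<lambda>(g, v). bv * (real v + 1) / (real n - real g + 1))
       + (1 - q) * measure_pmf.expectation (group_pmf n p q)
              (\<lambda>(g, v). bv * real v / (real n - real g + 1))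
       = q * bv"
proof -
  define s where "s g = bv / (real n - real g + 1)" for g
  have "(\<lambda>(g, v). bv * (real v + 1) / (real n - real g + 1)) = (\<lambda>(g, v). s g * real v + s g)"
    and "(\<lambda>(g, v). bv * real v / (real n - real g + 1)) = (\<lambda>(g, v). s g * real v + 0)"
    by (simp_all add: s_def fun_eq_iff distrib_left add_divide_distrib)
  then have "q * measure_pmf.expectation (group_pmf n p q)
              (\<lambda>(g, v). bv * (real v + 1) / (real n - real g + 1))
       + (1 - q) * measure_pmf.expectation (group_pmf n p q)
              (\<lambda>(g, v). bv * real v / (real n - real g + 1))
      = measure_pmf.expectation (binomial_pmf n p)
          (\<lambda>g. q * (s g * real (n - g) * q + s g) + (1 - q) * (s g * real (n - g) * q + 0))"
    using p q by (simp only: expectation_group_pmf_affine) simp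
  also have "\<dots> = measure_pmf.expectation (binomial_pmf n p) (\<lambda>g. q * bv)"
  proof (rule expectation_binomial_pmf_cong[OF p])
    fix g assume "g \<le> n"
    then have "s g * (real (n - g) + 1) = bv"
      by (simp add: s_def of_nat_diff)
    moreover have "q * (s g * real (n - g) * q + s g) + (1 - q) * (s g * real (n - g) * q + 0)
        = q * (s g * (real (n - g) + 1))"
      by (simp add: algebra_simps)
    ultimately show "q * (s g * real (n - g) * q + s g) + (1 - q) * (s g * real (n - g) * q + 0)
        = q * bv"
      by simp
  qed
  finally show ?thesis by simp
qed

lemma wG_minus_wVD:
  assumes p: "p \<in> {0..1}" and q: "q \<in> {0..1}"
  shows "wG n ba bv c p q - wVD n ba bv c p q = ba / (real n + 1) - q * (bv - c)"
proof -
  let ?E = "measure_pmf.expectation (group_pmf n p q)"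
  have "wG n ba bv c p q = ?E (\<lambda>x. (\<lambda>(g, v). ba * real g / (real n + 1)) x + ba / (real n + 1))"
    unfolding wG_def by (rule arg_cong[where f = ?E]) (auto simp: add_divide_distrib distrib_left)
  also have "\<dots> = ?E (\<lambda>(g, v). ba * real g / (real n + 1)) + ba / (real n + 1)"
    by (subst Bochner_Integration.integral_add) (simp_all add: integrable_group_pmf[OF p q])
  finally show ?thesis
    using club_good_mean_payoff[OF p q, of n bv] unfolding wVD_def wV_def wD_def
    by (simp add: algebra_simps)
qed

lemma wV_minus_wD:
  assumes p: "p \<in> {0..1}" and q: "q \<in> {0..1}"
  shows "wV n ba bv c p q - wD n ba bv c p q = bv / (real n + 1) * (\<Sum>k\<le>n. p ^ k) - c"
proof -
  let ?E = "measure_pmf.expectation (group_pmf n p q)"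
  have "?E (\<lambda>(g, v). bv * (real v + 1) / (real n - real g + 1))
      = ?E (\<lambda>x. (\<lambda>(g, v). bv * real v / (real n - real g + 1)) x
                 + (\<lambda>(g, v). bv * (1 / (real n - real g + 1))) x)"
    by (rule arg_cong[where f = ?E]) (auto simp: add_divide_distrib distrib_left)
  also have "\<dots> = ?E (\<lambda>(g, v). bv * real v / (real n - real g + 1))
                 + ?E (\<lambda>(g, v). bv * (1 / (real n - real g + 1)))"
    by (subst Bochner_Integration.integral_add) (simp_all add: integrable_group_pmf[OF p q])
  finally have "wV n ba bv c p q - wD n ba bv c p q = ?E (\<lambda>(g, v). bv * (1 / (real n - real g + 1))) - c"
    unfolding wV_def wD_def by simp
  also have "\<dots> = bv * measure_pmf.expectation (binomial_pmf n p) (\<lambda>g. 1 / (real n - real g + 1)) - c"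
    by (simp only: expectation_group_pmf_fst[OF p q] integral_mult_right_zero)
  finally show ?thesis
    by (simp add: expectation_binomial_pmf_inverse_complement[OF p])
qed

theorem mainTheorem3:
  fixes n :: nat and ba bv c p q :: real
  assumes "n \<ge> 1" and "p \<in> {0..1}" and "q \<in> {0..1}"
  shows "wG n ba bv c p q - wVD n ba bv c p q = ba / (real n + 1) - q * (bv - c) \<and>
         wV n ba bv c p q - wD n ba bv c p q = bv / (real n + 1) * (\<Sum>k=0..n. p ^ k) - c \<and>
         pdot n ba bv c p q = p * (1 - p) * (ba / (real n + 1) - q * (bv - c)) \<and>
         qdot n ba bv c p q = q * (1 - q) * (bv / (real n + 1) * (\<Sum>k=0..n. p ^ k) - c)"
  using wG_minus_wVD[OF assms(2,3)] wV_minus_wD[OF assms(2,3)]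
  by (simp add: pdot_def qdot_def atLeast0AtMost)

end
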